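(* For every $\mathcal{C}$-orderable group $G$, the intersection of any family of $\mathcal{C}$-relatively convex subgroups of $G$ is $\mathcal{C}$-relatively convex.
   Context: A $\mathcal{C}$-ordering is a total order $\preceq$ on $G$ invariant under left multiplication such that for all $f\succ id$, $g\succ id$ there is $n\in\mathbb{N}$ with $fg^n\succ g$. A subgroup $H$ is convex for $\preceq$ if $f_1\prec h\prec f_2$ with $f_1,f_2\in H$ implies $h\in H$; $H$ is $\mathcal{C}$-relatively convex if there is a $\mathcal{C}$-ordering of $G$ for which $H$ is convex. *)

theory Defs
  imports "HOL-Algebra.Group"
begin

definition C_ordering :: "('a, 'b) monoid_scheme \<Rightarrow> ('a \<Rightarrow> 'a \<Rightarrow> bool) \<Rightarrow> bool" where
  "C_ordering G R \<longleftrightarrow>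
     (\<forall>x\<in>carrier G. R x x) \<and>
     (\<forall>x\<in>carrier G. \<forall>y\<in>carrier G. R x y \<and> R y x \<longrightarrow> x = y) \<and>
     (\<forall>x\<in>carrier G. \<forall>y\<in>carrier G. \<forall>z\<in>carrier G. R x y \<and> R y z \<longrightarrow> R x z) \<and>
     (\<forall>x\<in>carrier G. \<forall>y\<in>carrier G. R x y \<or> R y x) \<and>
     (\<forall>f\<in>carrier G. \<forall>x\<in>carrier G. \<forall>y\<in>carrier G.
        R x y \<longrightarrow> R (f \<otimes>\<^bsub>G\<^esub> x) (f \<otimes>\<^bsub>G\<^esub> y)) \<and>
     (\<forall>f\<in>carrier G. \<forall>g\<in>carrier G.
        (R \<one>\<^bsub>G\<^esub> f \<and> f \<noteq> \<one>\<^bsub>G\<^esub>) \<and> (R \<one>\<^bsub>G\<^esub> g \<and> g \<noteq> \<one>\<^bsub>G\<^esub>) \<longrightarrow>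
        (\<exists>n::nat. R g (f \<otimes>\<^bsub>G\<^esub> (g [^]\<^bsub>G\<^esub> n)) \<and> f \<otimes>\<^bsub>G\<^esub> (g [^]\<^bsub>G\<^esub> n) \<noteq> g))"

definition C_orderable :: "('a, 'b) monoid_scheme \<Rightarrow> bool" where
  "C_orderable G \<longleftrightarrow> (\<exists>R. C_ordering G R)"

definition convex_for :: "('a, 'b) monoid_scheme \<Rightarrow> ('a \<Rightarrow> 'a \<Rightarrow> bool) \<Rightarrow> 'a set \<Rightarrow> bool" where
  "convex_for G R H \<longleftrightarrow>
     (\<forall>f1\<in>H. \<forall>f2\<in>H. \<forall>h\<in>carrier G.
        (R f1 h \<and> f1 \<noteq> h) \<and> (R h f2 \<and> h \<noteq> f2) \<longrightarrow> h \<in> H)"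

definition C_relatively_convex :: "('a, 'b) monoid_scheme \<Rightarrow> 'a set \<Rightarrow> bool" where
  "C_relatively_convex G H \<longleftrightarrow> subgroup H G \<and> (\<exists>R. C_ordering G R \<and> convex_for G R H)"

end

theory Submission
  imports Defs
begin

text \<open>Well-order the family. An element outside the intersection \<open>K\<close> is declared positive
  according to the C-ordering attached to the first subgroup of the family that misses it, and an
  element of \<open>K\<close> according to an arbitrary C-ordering of \<open>G\<close>. Working with positive cones, the
  key point is that for a convex subgroup \<open>H\<close> the positive elements outside \<open>H\<close> stay positive and
  outside \<open>H\<close> under multiplication by elements of \<open>H\<close> on either side; this makes the combined
  cone closed under products, total and Conradian, and it also makes \<open>K\<close> convex.\<close>

lemma (in group) subgroup_mult_left_iff:
  assumes "subgroup H G" "a \<in> H" "x \<in> carrier G"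
  shows "a \<otimes> x \<in> H \<longleftrightarrow> x \<in> H"
  by (metis assms inv_solve_left' m_closed subgroup.m_closed subgroup.m_inv_closed subgroup.mem_carrier)

lemma (in group) subgroup_mult_right_iff:
  assumes "subgroup H G" "a \<in> H" "x \<in> carrier G"
  shows "x \<otimes> a \<in> H \<longleftrightarrow> x \<in> H"
  by (metis assms inv_solve_right' m_closed subgroup.m_closed subgroup.m_inv_closed subgroup.mem_carrier)

lemma (in group) subgroup_inv_iff:
  assumes "subgroup H G" "x \<in> carrier G"
  shows "inv x \<in> H \<longleftrightarrow> x \<in> H"
  by (metis assms inv_inv subgroup.m_inv_closed)

lemma (in group) subgroup_nat_pow_closed:
  assumes "subgroup H G" "h \<in> H"
  shows "h [^] (n::nat) \<in> H"
  using monoid.nat_pow_closed[OF group.is_monoid[OF subgroup_imp_group[OF assms(1)]]] assms(2)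
    nat_pow_consistent[of h n H]
  by simp

lemma (in group) subgroup_Conrad_closed:
  assumes "subgroup H G" "f \<in> H" "g \<in> H"
  shows "inv g \<otimes> (f \<otimes> g [^] (n::nat)) \<in> H"
  using assms subgroup_nat_pow_closed subgroup.m_closed subgroup.m_inv_closed by metis

lemma (in group) mult_inv_cancel_left:
  "x \<in> carrier G \<Longrightarrow> y \<in> carrier G \<Longrightarrow> x \<otimes> (inv x \<otimes> y) = y"
  by (simp add: m_assoc[symmetric])

lemma (in group) inv_mult_cancel_left:
  "x \<in> carrier G \<Longrightarrow> y \<in> carrier G \<Longrightarrow> inv x \<otimes> (x \<otimes> y) = y"
  by (simp add: m_assoc[symmetric])

definition cone_order :: "('a, 'b) monoid_scheme \<Rightarrow> 'a set \<Rightarrow> 'a \<Rightarrow> 'a \<Rightarrow> bool" where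
  "cone_order G P x y \<longleftrightarrow> x = y \<or> inv\<^bsub>G\<^esub> x \<otimes>\<^bsub>G\<^esub> y \<in> P"

locale C_cone = group G for G (structure) +
  fixes P :: "'a set"
  assumes cone_subset: "P \<subseteq> carrier G"
    and cone_mult_closed: "x \<in> P \<Longrightarrow> y \<in> P \<Longrightarrow> x \<otimes> y \<in> P"
    and cone_inv_notin: "x \<in> P \<Longrightarrow> inv x \<notin> P"
    and cone_total: "x \<in> carrier G \<Longrightarrow> x \<noteq> \<one> \<Longrightarrow> x \<in> P \<or> inv x \<in> P"
    and cone_Conrad: "f \<in> P \<Longrightarrow> g \<in> P \<Longrightarrow> \<exists>n::nat. inv g \<otimes> (f \<otimes> g [^] n) \<in> P"
begin

lemma cone_carrier: "x \<in> P \<Longrightarrow> x \<in> carrier G"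
  using cone_subset by blast

lemma one_notin_cone: "\<one> \<notin> P"
  using cone_inv_notin[of \<one>] by auto

lemma C_ordering_cone_order: "C_ordering G (cone_order G P)"
  unfolding C_ordering_def
proof (intro conjI ballI impI)
  fix x y z assume xyz: "x \<in> carrier G" "y \<in> carrier G" "z \<in> carrier G"
  have swap: "inv (inv x \<otimes> y) = inv y \<otimes> x"
    using xyz by (simp add: inv_mult_group)
  show "cone_order G P x x"
    by (simp add: cone_order_def)
  show "x = y" if "cone_order G P x y \<and> cone_order G P y x"
    using that swap cone_inv_notin[of "inv x \<otimes> y"] unfolding cone_order_def by auto
  show "cone_order G P x z" if "cone_order G P x y \<and> cone_order G P y z"
  proof -
    have "(inv x \<otimes> y) \<otimes> (inv y \<otimes> z) = inv x \<otimes> z"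
      using xyz by (simp add: m_assoc mult_inv_cancel_left)
    then show ?thesis
      using that cone_mult_closed[of "inv x \<otimes> y" "inv y \<otimes> z"] by (auto simp: cone_order_def)
  qed
  show "cone_order G P x y \<or> cone_order G P y x"
  proof (cases "x = y")
    case False
    then have "inv x \<otimes> y \<noteq> \<one>"
      using xyz mult_inv_cancel_left[of x y] by auto
    then show ?thesis
      using cone_total[of "inv x \<otimes> y"] swap xyz by (auto simp: cone_order_def)
  qed (simp add: cone_order_def)
  show "cone_order G P (f \<otimes> x) (f \<otimes> y)" if "f \<in> carrier G" "cone_order G P x y" for f
  proof -
    have "inv (f \<otimes> x) \<otimes> (f \<otimes> y) = inv x \<otimes> y"
      using that(1) xyz by (simp add: inv_mult_group m_assoc inv_mult_cancel_left)
    then show ?thesis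
      using that(2) by (auto simp: cone_order_def)
  qed
next
  fix f g assume fg: "f \<in> carrier G" "g \<in> carrier G"
    and pos: "(cone_order G P \<one> f \<and> f \<noteq> \<one>) \<and> (cone_order G P \<one> g \<and> g \<noteq> \<one>)"
  then have "f \<in> P" "g \<in> P"
    by (auto simp: cone_order_def)
  then obtain n :: nat where n: "inv g \<otimes> (f \<otimes> g [^] n) \<in> P"
    using cone_Conrad by blast
  have "f \<otimes> g [^] n \<noteq> g"
  proof
    assume "f \<otimes> g [^] n = g"
    with n have "inv g \<otimes> g \<in> P"
      by simp
    then show False
      using fg one_notin_cone by simp
  qed
  with n show "\<exists>n::nat. cone_order G P g (f \<otimes> g [^] n) \<and> f \<otimes> g [^] n \<noteq> g"
    unfolding cone_order_def by blast
qed

lemma convex_for_cone_order: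
  assumes "subgroup K G"
    and left: "\<And>a x. a \<in> K \<Longrightarrow> x \<in> P \<Longrightarrow> x \<notin> K \<Longrightarrow> a \<otimes> x \<in> P"
    and right: "\<And>a x. a \<in> K \<Longrightarrow> x \<in> P \<Longrightarrow> x \<notin> K \<Longrightarrow> x \<otimes> a \<in> P"
  shows "convex_for G (cone_order G P) K"
  unfolding convex_for_def
proof (intro ballI impI)
  fix f1 f2 h assume f: "f1 \<in> K" "f2 \<in> K" and h: "h \<in> carrier G"
    and between: "(cone_order G P f1 h \<and> f1 \<noteq> h) \<and> (cone_order G P h f2 \<and> h \<noteq> f2)"
  have fc: "f1 \<in> carrier G" "f2 \<in> carrier G"
    using f subgroup.mem_carrier[OF assms(1)] by auto
  show "h \<in> K"
  proof (rule ccontr)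
    assume "h \<notin> K"
    then have outside: "inv f1 \<otimes> h \<notin> K" "inv h \<otimes> f2 \<notin> K"
      using subgroup_mult_left_iff[OF assms(1) subgroup.m_inv_closed[OF assms(1) f(1)] h]
        subgroup_mult_right_iff[OF assms(1) f(2) inv_closed[OF h]] subgroup_inv_iff[OF assms(1) h]
      by auto
    have pos: "inv f1 \<otimes> h \<in> P" "inv h \<otimes> f2 \<in> P"
      using between by (auto simp: cone_order_def)
    have "h \<in> P"
      using left[OF f(1) pos(1) outside(1)] fc h by (simp add: mult_inv_cancel_left)
    moreover have "inv h \<in> P"
      using right[OF subgroup.m_inv_closed[OF assms(1) f(2)] pos(2) outside(2)] fc h
      by (simp add: m_assoc)
    ultimately show False
      using cone_inv_notin by auto
  qed
qed

end

locale convex_cone = C_cone +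
  fixes H :: "'a set"
  assumes subgroup: "subgroup H G"
    and convex: "convex_for G (cone_order G P) H"
begin

lemma subgroup_carrier: "a \<in> H \<Longrightarrow> a \<in> carrier G"
  using subgroup.mem_carrier[OF subgroup] by auto

lemma convex_between:
  assumes "f1 \<in> H" "f2 \<in> H" "h \<in> carrier G" "inv f1 \<otimes> h \<in> P" "inv h \<otimes> f2 \<in> P"
  shows "h \<in> H"
proof -
  have "f1 \<noteq> h" "h \<noteq> f2"
    using assms one_notin_cone by auto
  then show ?thesis
    using convex[unfolded convex_for_def, rule_format, of f1 f2 h] assms
    by (simp add: cone_order_def)
qed

lemma mult_left_pos:
  assumes a: "a \<in> H" and x: "x \<in> P" "x \<notin> H"
  shows "a \<otimes> x \<in> P"
proof (rule ccontr)
  assume "a \<otimes> x \<notin> P"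
  have ac: "a \<in> carrier G" and xc: "x \<in> carrier G"
    using a x subgroup_carrier cone_carrier by auto
  have "a \<otimes> x \<noteq> \<one>"
    using subgroup_mult_left_iff[OF subgroup a xc] subgroup.one_closed[OF subgroup] x by auto
  then have "inv x \<otimes> inv a \<in> P"
    using cone_total[of "a \<otimes> x"] \<open>a \<otimes> x \<notin> P\<close> ac xc by (simp add: inv_mult_group)
  then have "x \<in> H"
    using convex_between[of \<one> "inv a" x] subgroup.one_closed[OF subgroup]
      subgroup.m_inv_closed[OF subgroup a] x xc by simp
  with x show False
    by simp
qed

lemma mult_right_pos:
  assumes a: "a \<in> H" and x: "x \<in> P" "x \<notin> H"
  shows "x \<otimes> a \<in> P"
proof (rule ccontr)
  assume "x \<otimes> a \<notin> P"
  have ac: "a \<in> carrier G" and xc: "x \<in> carrier G"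
    using a x subgroup_carrier cone_carrier by auto
  have "x \<otimes> a \<noteq> \<one>"
    using subgroup_mult_right_iff[OF subgroup a xc] subgroup.one_closed[OF subgroup] x by auto
  then have "inv a \<otimes> inv x \<in> P"
    using cone_total[of "x \<otimes> a"] \<open>x \<otimes> a \<notin> P\<close> ac xc by (simp add: inv_mult_group)
  moreover have "inv a \<otimes> inv x \<notin> H"
    using subgroup_mult_left_iff[OF subgroup subgroup.m_inv_closed[OF subgroup a]]
      subgroup_inv_iff[OF subgroup xc] x xc by simp
  ultimately have "a \<otimes> (inv a \<otimes> inv x) \<in> P"
    using mult_left_pos[OF a] by simp
  then have "inv x \<in> P"
    using ac xc by (simp add: mult_inv_cancel_left)
  with x show False
    using cone_inv_notin by simp
qed

lemma mult_notin:
  assumes "x \<in> P" "y \<in> P" "x \<notin> H"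
  shows "x \<otimes> y \<notin> H"
proof
  assume "x \<otimes> y \<in> H"
  moreover have "inv x \<otimes> (x \<otimes> y) \<in> P"
    using assms cone_carrier by (simp add: inv_mult_cancel_left)
  ultimately have "x \<in> H"
    using convex_between[of \<one> "x \<otimes> y" x] subgroup.one_closed[OF subgroup] assms cone_carrier
    by simp
  with assms show False
    by simp
qed

lemma Conrad_outside:
  assumes g: "g \<in> P" "g \<notin> H" and f: "f \<in> P \<or> f \<in> H"
  shows "\<exists>n::nat. inv g \<otimes> (f \<otimes> g [^] n) \<in> P \<and> inv g \<otimes> (f \<otimes> g [^] n) \<notin> H"
proof -
  have gc: "g \<in> carrier G"
    using g cone_carrier by auto
  have pos_case: "\<exists>n::nat. inv g \<otimes> (f \<otimes> g [^] n) \<in> P \<and> inv g \<otimes> (f \<otimes> g [^] n) \<notin> H"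
    if fP: "f \<in> P" for f
  proof -
    have fc: "f \<in> carrier G"
      using fP cone_carrier by auto
    obtain n :: nat where n: "inv g \<otimes> (f \<otimes> g [^] n) \<in> P"
      using cone_Conrad[OF fP g(1)] by blast
    show ?thesis
    proof (cases "inv g \<otimes> (f \<otimes> g [^] n) \<in> H")
      case True
      \<comment> \<open>one more factor \<open>g\<close> leaves \<open>H\<close> while staying positive\<close>
      have "inv g \<otimes> (f \<otimes> g [^] Suc n) = (inv g \<otimes> (f \<otimes> g [^] n)) \<otimes> g"
        using fc gc by (simp add: m_assoc)
      moreover have "(inv g \<otimes> (f \<otimes> g [^] n)) \<otimes> g \<in> P"
        using mult_left_pos[OF True g] .
      moreover have "(inv g \<otimes> (f \<otimes> g [^] n)) \<otimes> g \<notin> H"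
        using subgroup_mult_left_iff[OF subgroup True gc] g by simp
      ultimately show ?thesis
        by metis
    qed (use n in blast)
  qed
  show ?thesis
  proof (cases "f \<in> P")
    case False
    with f have fH: "f \<in> H"
      by simp
    then obtain n :: nat where "inv g \<otimes> ((f \<otimes> g) \<otimes> g [^] n) \<in> P"
      "inv g \<otimes> ((f \<otimes> g) \<otimes> g [^] n) \<notin> H"
      using pos_case[OF mult_left_pos[OF fH g]] by blast
    moreover have "(f \<otimes> g) \<otimes> g [^] n = f \<otimes> g [^] Suc n"
      using subgroup_carrier[OF fH] gc by (simp only: nat_pow_Suc2 m_assoc nat_pow_closed)
    ultimately show ?thesis
      by metis
  qed (rule pos_case)
qed

end

definition positive_cone :: "('a, 'b) monoid_scheme \<Rightarrow> ('a \<Rightarrow> 'a \<Rightarrow> bool) \<Rightarrow> 'a set" where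
  "positive_cone G R = {x \<in> carrier G. R \<one>\<^bsub>G\<^esub> x \<and> x \<noteq> \<one>\<^bsub>G\<^esub>}"

locale C_ordered_group = group G for G (structure) +
  fixes R :: "'a \<Rightarrow> 'a \<Rightarrow> bool"
  assumes C_ordering: "C_ordering G R"
begin

lemmas C_ordering_conjuncts = C_ordering[unfolded C_ordering_def]

lemma ord_refl: "x \<in> carrier G \<Longrightarrow> R x x"
  using C_ordering_conjuncts by simp

lemma ord_antisym: "x \<in> carrier G \<Longrightarrow> y \<in> carrier G \<Longrightarrow> R x y \<Longrightarrow> R y x \<Longrightarrow> x = y"
  using C_ordering_conjuncts[THEN conjunct2, THEN conjunct1] by simp

lemma ord_trans:
  "x \<in> carrier G \<Longrightarrow> y \<in> carrier G \<Longrightarrow> z \<in> carrier G \<Longrightarrow> R x y \<Longrightarrow> R y z \<Longrightarrow> R x z"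
  using C_ordering_conjuncts[THEN conjunct2, THEN conjunct2, THEN conjunct1] by metis

lemma ord_total: "x \<in> carrier G \<Longrightarrow> y \<in> carrier G \<Longrightarrow> R x y \<or> R y x"
  using C_ordering_conjuncts[THEN conjunct2, THEN conjunct2, THEN conjunct2, THEN conjunct1] by simp

lemma ord_mult_left:
  "f \<in> carrier G \<Longrightarrow> x \<in> carrier G \<Longrightarrow> y \<in> carrier G \<Longrightarrow> R x y \<Longrightarrow> R (f \<otimes> x) (f \<otimes> y)"
  using C_ordering_conjuncts[THEN conjunct2, THEN conjunct2, THEN conjunct2, THEN conjunct2,
      THEN conjunct1]
  by simp

lemma ord_Conrad:
  "f \<in> carrier G \<Longrightarrow> g \<in> carrier G \<Longrightarrow> R \<one> f \<Longrightarrow> f \<noteq> \<one> \<Longrightarrow> R \<one> g \<Longrightarrow> g \<noteq> \<one> \<Longrightarrow>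
    \<exists>n::nat. R g (f \<otimes> g [^] n) \<and> f \<otimes> g [^] n \<noteq> g"
  using C_ordering_conjuncts[THEN conjunct2, THEN conjunct2, THEN conjunct2, THEN conjunct2,
      THEN conjunct2]
  by simp

lemma positive_cone_iff:
  assumes "x \<in> carrier G" "y \<in> carrier G"
  shows "inv x \<otimes> y \<in> positive_cone G R \<longleftrightarrow> R x y \<and> x \<noteq> y"
proof -
  have "inv x \<otimes> y = \<one> \<longleftrightarrow> x = y"
    using assms mult_inv_cancel_left[of x y] by auto
  moreover have "R \<one> (inv x \<otimes> y) \<longleftrightarrow> R x y"
    using ord_mult_left[of x \<one> "inv x \<otimes> y"] ord_mult_left[of "inv x" x y] assms
    by (auto simp: mult_inv_cancel_left)
  ultimately show ?thesis
    using assms by (auto simp: positive_cone_def)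
qed

lemma cone_order_positive_cone:
  "x \<in> carrier G \<Longrightarrow> y \<in> carrier G \<Longrightarrow> cone_order G (positive_cone G R) x y \<longleftrightarrow> R x y"
  using positive_cone_iff ord_refl by (auto simp: cone_order_def)

lemma C_cone_positive_cone: "C_cone G (positive_cone G R)"
proof
  show "positive_cone G R \<subseteq> carrier G"
    by (auto simp: positive_cone_def)
next
  fix x y assume x: "x \<in> positive_cone G R" and y: "y \<in> positive_cone G R"
  then have xc: "x \<in> carrier G" and yc: "y \<in> carrier G" and "R \<one> x" "x \<noteq> \<one>"
    by (auto simp: positive_cone_def)
  have "R x (x \<otimes> y)"
    using positive_cone_iff[of x "x \<otimes> y"] y xc yc by (simp add: inv_mult_cancel_left)
  then have "R \<one> (x \<otimes> y)"
    using ord_trans[of \<one> x "x \<otimes> y"] \<open>R \<one> x\<close> xc yc by simp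
  moreover have "x \<otimes> y \<noteq> \<one>"
    using \<open>R x (x \<otimes> y)\<close> \<open>R \<one> x\<close> \<open>x \<noteq> \<one>\<close> ord_antisym[of x \<one>] xc by auto
  ultimately show "x \<otimes> y \<in> positive_cone G R"
    using xc yc by (simp add: positive_cone_def)
next
  fix x assume x: "x \<in> positive_cone G R"
  then have xc: "x \<in> carrier G" and "R \<one> x" "x \<noteq> \<one>"
    by (auto simp: positive_cone_def)
  show "inv x \<notin> positive_cone G R"
  proof
    assume "inv x \<in> positive_cone G R"
    then have "R x \<one>"
      using positive_cone_iff[of x \<one>] xc by simp
    with \<open>R \<one> x\<close> \<open>x \<noteq> \<one>\<close> show False
      using ord_antisym[of x \<one>] xc by simp
  qed
next
  fix x assume xc: "x \<in> carrier G" and "x \<noteq> \<one>"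
  then have "R \<one> x \<or> inv x \<otimes> \<one> \<in> positive_cone G R"
    using ord_total[of \<one> x] positive_cone_iff[of x \<one>] by auto
  then show "x \<in> positive_cone G R \<or> inv x \<in> positive_cone G R"
    using xc \<open>x \<noteq> \<one>\<close> by (auto simp: positive_cone_def)
next
  fix f g assume "f \<in> positive_cone G R" "g \<in> positive_cone G R"
  then have f: "f \<in> carrier G" "R \<one> f" "f \<noteq> \<one>" and g: "g \<in> carrier G" "R \<one> g" "g \<noteq> \<one>"
    by (simp_all add: positive_cone_def)
  then obtain n :: nat where "R g (f \<otimes> g [^] n)" "f \<otimes> g [^] n \<noteq> g"
    using ord_Conrad by blast
  then have "inv g \<otimes> (f \<otimes> g [^] n) \<in> positive_cone G R"
    using positive_cone_iff[of g "f \<otimes> g [^] n"] f(1) g(1) by simp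
  then show "\<exists>n::nat. inv g \<otimes> (f \<otimes> g [^] n) \<in> positive_cone G R" ..
qed

lemma convex_cone_positive_cone:
  assumes "subgroup H G" "convex_for G R H"
  shows "convex_cone G (positive_cone G R) H"
proof -
  have "convex_for G (cone_order G (positive_cone G R)) H"
    unfolding convex_for_def
  proof (intro ballI impI)
    fix f1 f2 h assume "f1 \<in> H" "f2 \<in> H" "h \<in> carrier G"
      and "(cone_order G (positive_cone G R) f1 h \<and> f1 \<noteq> h) \<and>
        (cone_order G (positive_cone G R) h f2 \<and> h \<noteq> f2)"
    moreover have "f1 \<in> carrier G" "f2 \<in> carrier G"
      using \<open>f1 \<in> H\<close> \<open>f2 \<in> H\<close> subgroup.mem_carrier[OF assms(1)] by simp_all
    ultimately show "h \<in> H"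
      using assms(2)[unfolded convex_for_def, rule_format, of f1 f2 h] cone_order_positive_cone
      by simp
  qed
  with assms(1) show ?thesis
    using C_cone_positive_cone by (simp add: convex_cone_def convex_cone_axioms_def)
qed

end

locale C_cone_family = group G for G (structure) +
  fixes W :: "'a set rel" and Ps :: "'a set \<Rightarrow> 'a set" and P0 :: "'a set"
  assumes well_order: "Well_order W"
    and convex_cones: "H \<in> Field W \<Longrightarrow> convex_cone G (Ps H) H"
    and base_cone: "C_cone G P0"
begin

definition intersection :: "'a set" where
  "intersection = carrier G \<inter> \<Inter>(Field W)"

definition first_avoiding :: "'a set \<Rightarrow> 'a set \<Rightarrow> bool" where
  "first_avoiding X H \<longleftrightarrow>
     H \<in> Field W \<and> \<not> X \<subseteq> H \<and> (\<forall>H'\<in>Field W. \<not> X \<subseteq> H' \<longrightarrow> (H, H') \<in> W)"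

definition lex_cone :: "'a set" where
  "lex_cone = (intersection \<inter> P0) \<union> {x. \<exists>H. first_avoiding {x} H \<and> x \<in> Ps H}"

lemma subgroup_family: "H \<in> Field W \<Longrightarrow> subgroup H G"
  using convex_cones convex_cone.subgroup by blast

lemma subgroup_intersection: "subgroup intersection G"
proof -
  have "subgroup (\<Inter>(insert (carrier G) (Field W))) G"
    using subgroups_Inter[of "insert (carrier G) (Field W)"] subgroup_self subgroup_family by auto
  then show ?thesis
    by (simp add: intersection_def)
qed

lemma first_avoiding_exists:
  assumes "\<not> X \<subseteq> \<Inter>(Field W)"
  shows "\<exists>H. first_avoiding X H"
proof -
  let ?B = "{H \<in> Field W. \<not> X \<subseteq> H}"
  have wo: "wo_rel W"
    using well_order by (simp add: wo_rel_def)
  have nonempty: "?B \<noteq> {}"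
    using assms by auto
  have "?B \<subseteq> Field W"
    by auto
  then have "wo_rel.minim W ?B \<in> ?B" "\<And>H'. H' \<in> ?B \<Longrightarrow> (wo_rel.minim W ?B, H') \<in> W"
    using wo_rel.minim_in[OF wo _ nonempty] wo_rel.minim_least[OF wo] by auto
  then have "first_avoiding X (wo_rel.minim W ?B)"
    unfolding first_avoiding_def by auto
  then show ?thesis ..
qed

lemma first_avoiding_unique: "first_avoiding X H1 \<Longrightarrow> first_avoiding X H2 \<Longrightarrow> H1 = H2"
  using wo_rel.ANTISYM[of W] well_order unfolding first_avoiding_def wo_rel_def antisym_def
  by blast

lemma first_avoiding_singleton:
  assumes "first_avoiding X H" "y \<notin> H"
    and "\<And>H'. H' \<in> Field W \<Longrightarrow> X \<subseteq> H' \<Longrightarrow> y \<in> H'"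
  shows "first_avoiding {y} H"
  using assms unfolding first_avoiding_def by blast

lemma first_avoiding_convex_cone: "first_avoiding X H \<Longrightarrow> convex_cone G (Ps H) H"
  using convex_cones by (simp add: first_avoiding_def)

lemma first_avoiding_notin_intersection: "first_avoiding {x} H \<Longrightarrow> x \<notin> intersection"
  by (auto simp: first_avoiding_def intersection_def)

lemma lex_cone_intersection: "x \<in> intersection \<Longrightarrow> x \<in> lex_cone \<longleftrightarrow> x \<in> P0"
  using first_avoiding_notin_intersection by (auto simp: lex_cone_def)

lemma lex_cone_first_avoiding:
  assumes "first_avoiding {x} H"
  shows "x \<in> lex_cone \<longleftrightarrow> x \<in> Ps H"
proof
  assume "x \<in> lex_cone"
  then obtain H' where "first_avoiding {x} H'" "x \<in> Ps H'"
    using first_avoiding_notin_intersection[OF assms] by (auto simp: lex_cone_def)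
  then show "x \<in> Ps H"
    using first_avoiding_unique[OF assms] by simp
qed (use assms in \<open>auto simp: lex_cone_def\<close>)

lemma lex_cone_outside:
  assumes "first_avoiding X H" "x \<in> X" "x \<notin> H" "x \<in> lex_cone"
  shows "x \<in> Ps H"
  using first_avoiding_singleton[OF assms(1,3)] assms(2,4) lex_cone_first_avoiding by blast

lemma lex_cone_intro:
  assumes "first_avoiding X H" "y \<in> Ps H" "y \<notin> H"
    and "\<And>H'. H' \<in> Field W \<Longrightarrow> X \<subseteq> H' \<Longrightarrow> y \<in> H'"
  shows "y \<in> lex_cone"
  using first_avoiding_singleton[OF assms(1,3,4)] assms(2) lex_cone_first_avoiding by blast

lemma first_avoiding_pair:
  assumes "x \<in> carrier G" "y \<in> carrier G" "x \<notin> intersection \<or> y \<notin> intersection"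
  obtains H where "first_avoiding {x, y} H"
  using first_avoiding_exists[of "{x, y}"] assms by (auto simp: intersection_def)

lemma lex_cone_subset: "lex_cone \<subseteq> carrier G"
proof
  fix x assume "x \<in> lex_cone"
  then consider "x \<in> intersection" | H where "first_avoiding {x} H" "x \<in> Ps H"
    by (auto simp: lex_cone_def)
  then show "x \<in> carrier G"
  proof cases
    case 2
    then show ?thesis
      using first_avoiding_convex_cone convex_cone.axioms(1) C_cone.cone_carrier by metis
  qed (simp add: intersection_def)
qed

lemma lex_cone_mult_closed:
  assumes x: "x \<in> lex_cone" and y: "y \<in> lex_cone"
  shows "x \<otimes> y \<in> lex_cone"
proof -
  have xc: "x \<in> carrier G" and yc: "y \<in> carrier G"
    using x y lex_cone_subset by auto
  show ?thesis
  proof (cases "x \<in> intersection \<and> y \<in> intersection")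
    case True
    then show ?thesis
      using x y subgroup.m_closed[OF subgroup_intersection] C_cone.cone_mult_closed[OF base_cone]
        lex_cone_intersection by simp
  next
    case False
    then obtain H where H: "first_avoiding {x, y} H"
      using first_avoiding_pair xc yc by blast
    interpret convex_cone G "Ps H" H
      using first_avoiding_convex_cone[OF H] .
    have "x \<notin> H \<Longrightarrow> x \<in> Ps H" "y \<notin> H \<Longrightarrow> y \<in> Ps H"
      using lex_cone_outside[OF H] x y by auto
    moreover have "x \<notin> H \<or> y \<notin> H"
      using H by (simp add: first_avoiding_def)
    ultimately have "x \<otimes> y \<in> Ps H \<and> x \<otimes> y \<notin> H"
      using mult_left_pos mult_right_pos cone_mult_closed mult_notin
        subgroup_mult_left_iff[OF subgroup _ yc] subgroup_mult_right_iff[OF subgroup _ xc]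
      by (cases "x \<in> H"; cases "y \<in> H") auto
    then show ?thesis
      using lex_cone_intro[OF H] subgroup_family subgroup.m_closed by (metis insert_subset)
  qed
qed

lemma first_avoiding_inv:
  assumes "x \<in> carrier G" "first_avoiding {x} H"
  shows "first_avoiding {inv x} H"
proof (rule first_avoiding_singleton[OF assms(2)])
  show "inv x \<notin> H"
    using assms subgroup_inv_iff[OF subgroup_family] by (simp add: first_avoiding_def)
  show "inv x \<in> H'" if "H' \<in> Field W" "{x} \<subseteq> H'" for H'
    using that subgroup.m_inv_closed[OF subgroup_family] by simp
qed

lemma lex_cone_inv_notin:
  assumes x: "x \<in> lex_cone"
  shows "inv x \<notin> lex_cone"
proof -
  have xc: "x \<in> carrier G"
    using x lex_cone_subset by auto
  show ?thesis
  proof (cases "x \<in> intersection")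
    case True
    then show ?thesis
      using x subgroup.m_inv_closed[OF subgroup_intersection] C_cone.cone_inv_notin[OF base_cone]
        lex_cone_intersection by simp
  next
    case False
    then obtain H where H: "first_avoiding {x} H"
      using first_avoiding_pair[OF xc xc] by auto
    then show ?thesis
      using x first_avoiding_inv[OF xc H] lex_cone_first_avoiding
        C_cone.cone_inv_notin[OF convex_cone.axioms(1)[OF first_avoiding_convex_cone[OF H]]]
      by simp
  qed
qed

lemma lex_cone_total:
  assumes xc: "x \<in> carrier G" and "x \<noteq> \<one>"
  shows "x \<in> lex_cone \<or> inv x \<in> lex_cone"
proof (cases "x \<in> intersection")
  case True
  then show ?thesis
    using assms subgroup.m_inv_closed[OF subgroup_intersection] C_cone.cone_total[OF base_cone]
      lex_cone_intersection by simp
next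
  case False
  then obtain H where H: "first_avoiding {x} H"
    using first_avoiding_pair[OF xc xc] by auto
  then show ?thesis
    using assms first_avoiding_inv[OF xc H] lex_cone_first_avoiding
      C_cone.cone_total[OF convex_cone.axioms(1)[OF first_avoiding_convex_cone[OF H]]]
    by simp
qed

lemma lex_cone_Conrad:
  assumes f: "f \<in> lex_cone" and g: "g \<in> lex_cone"
  shows "\<exists>n::nat. inv g \<otimes> (f \<otimes> g [^] n) \<in> lex_cone"
proof -
  have fc: "f \<in> carrier G" and gc: "g \<in> carrier G"
    using f g lex_cone_subset by auto
  show ?thesis
  proof (cases "f \<in> intersection \<and> g \<in> intersection")
    case True
    then show ?thesis
      using f g C_cone.cone_Conrad[OF base_cone] lex_cone_intersection
        subgroup_Conrad_closed[OF subgroup_intersection] by metis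
  next
    case False
    then obtain H where H: "first_avoiding {f, g} H"
      using first_avoiding_pair fc gc by blast
    interpret convex_cone G "Ps H" H
      using first_avoiding_convex_cone[OF H] .
    have outside: "f \<notin> H \<Longrightarrow> f \<in> Ps H" "g \<notin> H \<Longrightarrow> g \<in> Ps H"
      using lex_cone_outside[OF H] f g by auto
    have "\<exists>n::nat. inv g \<otimes> (f \<otimes> g [^] n) \<in> Ps H \<and> inv g \<otimes> (f \<otimes> g [^] n) \<notin> H"
    proof (cases "g \<in> H")
      case True
      with H have "f \<in> Ps H" "f \<notin> H"
        using outside by (auto simp: first_avoiding_def)
      then have "inv g \<otimes> (f \<otimes> g [^] (0::nat)) \<in> Ps H \<and> inv g \<otimes> (f \<otimes> g [^] (0::nat)) \<notin> H"
        using mult_left_pos subgroup_mult_left_iff[OF subgroup _ fc]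
          subgroup.m_inv_closed[OF subgroup True] fc
        by simp
      then show ?thesis ..
    next
      case False
      then show ?thesis
        using Conrad_outside outside by blast
    qed
    then show ?thesis
      using lex_cone_intro[OF H] subgroup_family subgroup_Conrad_closed by (metis insert_subset)
  qed
qed

lemma C_cone_lex_cone: "C_cone G lex_cone"
  by (intro C_cone.intro C_cone_axioms.intro is_group lex_cone_subset lex_cone_mult_closed
      lex_cone_inv_notin lex_cone_total lex_cone_Conrad)

lemma convex_for_intersection: "convex_for G (cone_order G lex_cone) intersection"
proof (rule C_cone.convex_for_cone_order[OF C_cone_lex_cone subgroup_intersection])
  fix a x assume a: "a \<in> intersection" and x: "x \<in> lex_cone" "x \<notin> intersection"
  have xc: "x \<in> carrier G"
    using x lex_cone_subset by auto
  obtain H where H: "first_avoiding {x} H"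
    using first_avoiding_pair[OF xc xc] x by auto
  interpret convex_cone G "Ps H" H
    using first_avoiding_convex_cone[OF H] .
  have aH: "a \<in> H" and xH: "x \<notin> H" and xP: "x \<in> Ps H"
    using a H x lex_cone_first_avoiding[OF H] by (auto simp: intersection_def first_avoiding_def)
  have contains: "a \<otimes> x \<in> H'" "x \<otimes> a \<in> H'" if "H' \<in> Field W" "{x} \<subseteq> H'" for H'
    using that a subgroup.m_closed[OF subgroup_family[OF that(1)]] by (auto simp: intersection_def)
  show "a \<otimes> x \<in> lex_cone"
    using lex_cone_intro[OF H mult_left_pos[OF aH xP xH]] subgroup_mult_left_iff[OF subgroup aH xc]
      xH contains(1) by blast
  show "x \<otimes> a \<in> lex_cone"
    using lex_cone_intro[OF H mult_right_pos[OF aH xP xH]] subgroup_mult_right_iff[OF subgroup aH xc]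
      xH contains(2) by blast
qed

end

theorem mainTheorem19:
  fixes G :: "('a, 'b) monoid_scheme" and \<H> :: "'a set set"
  assumes "group G"
    and "C_orderable G"
    and "\<forall>H\<in>\<H>. C_relatively_convex G H"
  shows "C_relatively_convex G (carrier G \<inter> \<Inter>\<H>)"
proof -
  obtain R0 where R0: "C_ordering G R0"
    using assms(2) unfolding C_orderable_def by blast
  obtain Rs where Rs: "\<And>H. H \<in> \<H> \<Longrightarrow> subgroup H G \<and> C_ordering G (Rs H) \<and> convex_for G (Rs H) H"
    using assms(3) unfolding C_relatively_convex_def by metis
  obtain W where W: "well_order_on \<H> W"
    using well_order_on by blast
  then have field: "Field W = \<H>"
    using well_order_on_Field by blast
  have ordered: "C_ordered_group G R" if "C_ordering G R" for R
    using assms(1) that by (simp add: C_ordered_group_def C_ordered_group_axioms_def)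
  have "Well_order W"
    using W field by simp
  moreover have "convex_cone G (positive_cone G (Rs H)) H" if "H \<in> Field W" for H
    using Rs[of H] that field C_ordered_group.convex_cone_positive_cone[OF ordered] by simp
  moreover have "C_cone G (positive_cone G R0)"
    using C_ordered_group.C_cone_positive_cone[OF ordered[OF R0]] .
  ultimately interpret C_cone_family G W "\<lambda>H. positive_cone G (Rs H)" "positive_cone G R0"
    using assms(1) by (simp add: C_cone_family_def C_cone_family_axioms_def)
  show ?thesis
    unfolding C_relatively_convex_def
    using subgroup_intersection C_cone.C_ordering_cone_order[OF C_cone_lex_cone]
      convex_for_intersection field
    by (auto simp: intersection_def)
qed

end
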